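(* Let $J\ge1$ and let $\gamma\subset\mathbb R^2$ be a locally rectifiable curve joining $x$ to $y$, where $x,y\in\mathbb R^2$. Then $car(\gamma,J)$ is a $J$-carrot John domain (with center $y$). More precisely, for every $z\in car(\gamma,J)$ there exist a rectifiable curve $\gamma_z$ joining $z$ to $y$ and a point $\eta\in\gamma$ such that $\gamma[\eta,y]=\gamma_z[\eta,y]$ and, for each $a\in\gamma[\eta,y]$, $$\ell(\gamma_z[z,a])\le\ell(\gamma[x,a]),\qquad car(\gamma_z,J)\subset car(\gamma,J).$$
   Context: For a curve $\gamma$ and points $p,q\in\gamma$, $\gamma[p,q]$ denotes the subcurve joining $p$ to $q$ and $\ell(\cdot)$ the Euclidean length. For a curve $\gamma$ starting at a point $v$ (its vertex), the $J$-carrot is $car(\gamma,J):=\bigcup\{B(w,\ell(\gamma[v,w])/J): w\in\gamma\setminus\{v\}\}$; thus $car(\gamma,J)$ has vertex $x$ and $car(\gamma_z,J)$ has vertex $z$. A domain $D$ is a $J$-carrot John domain with center $y$ if every point $p\in D$ can be joined to $y$ by a curve $\beta\subset D$ with $car(\beta,J)\subset D$. *)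

theory Defs
  imports "HOL-Analysis.Analysis"
begin

definition polygonal_sums :: "(real \<Rightarrow> 'a::metric_space) \<Rightarrow> real \<Rightarrow> real \<Rightarrow> real set" where
  "polygonal_sums g a b =
     {(\<Sum>i<n. dist (g (p (Suc i))) (g (p i))) | n p.
        p 0 = a \<and> p n = b \<and> (\<forall>i<n. p i \<le> p (Suc i))}"

definition curve_length :: "(real \<Rightarrow> 'a::metric_space) \<Rightarrow> real \<Rightarrow> real \<Rightarrow> real" where
  "curve_length g a b = Sup (polygonal_sums g a b)"

definition rectifiable_on :: "(real \<Rightarrow> 'a::metric_space) \<Rightarrow> real \<Rightarrow> real \<Rightarrow> bool" where
  "rectifiable_on g a b \<longleftrightarrow> bdd_above (polygonal_sums g a b)"

definition rectifiable_path :: "(real \<Rightarrow> 'a::real_normed_vector) \<Rightarrow> bool" where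
  "rectifiable_path g \<longleftrightarrow> path g \<and> rectifiable_on g 0 1"

definition locally_rectifiable_path :: "(real \<Rightarrow> 'a::real_normed_vector) \<Rightarrow> bool" where
  "locally_rectifiable_path g \<longleftrightarrow>
     path g \<and> (\<forall>a b. 0 \<le> a \<and> a \<le> b \<and> b \<le> 1 \<longrightarrow> rectifiable_on g a b)"

definition carrot :: "(real \<Rightarrow> 'a::real_normed_vector) \<Rightarrow> real \<Rightarrow> 'a set" where
  "carrot g J = \<Union> {ball (g t) (curve_length g 0 t / J) | t. t \<in> {0..1} \<and> g t \<noteq> g 0}"

definition john_carrot_domain :: "'a::real_normed_vector set \<Rightarrow> real \<Rightarrow> 'a \<Rightarrow> bool" where
  "john_carrot_domain D J y \<longleftrightarrow> open D \<and> connected D \<and>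
     (\<forall>p\<in>D. \<exists>\<beta>. path \<beta> \<and> pathstart \<beta> = p \<and> pathfinish \<beta> = y \<and>
        path_image \<beta> \<subseteq> D \<and> carrot \<beta> J \<subseteq> D)"

end

theory Submission
  imports Defs
begin

(* For z in the carrot pick t with |z - g t| < l(g[0,t])/J and let gamma_z run along the
   segment [z, g t] and then along g from g t to y. On the segment, the balls of car(gamma_z)
   stay inside B(g t, l(g[0,t])/J) because J >= 1; on the common tail, gamma_z is shorter than g
   by l(g[0,t]) - |z - g t| > 0, so its balls lie in the corresponding balls of car(g).
   The one subtlety is a parameter where g is back at its vertex: that ball is excluded from the
   definition of the carrot, but it is exhausted by admissible balls centred at earlier points of g
   close to the vertex, so it still lies in the carrot. *)

lemma less_if_less_divide_ge_one:
  fixes a b J :: real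
  assumes "1 \<le> J" "0 \<le> a" "a < b / J"
  shows "a < b"
proof -
  have "0 < b / J" using assms(2,3) by linarith
  then have "b / J \<le> b / 1"
    using assms(1) by (intro divide_left_mono) (auto simp: zero_less_divide_iff)
  with assms(3) show ?thesis by simp
qed

lemma path_connected_if_joined_to_point:
  assumes "\<And>p. p \<in> S \<Longrightarrow> \<exists>h. path h \<and> path_image h \<subseteq> S \<and> pathstart h = p \<and> pathfinish h = y"
  shows "path_connected S"
  unfolding path_connected_component
  using assms path_component_sym path_component_trans unfolding path_component_def by metis

section \<open>Inscribed polygons and curve length\<close>

lemma partition_mono:
  fixes p :: "nat \<Rightarrow> real"
  assumes "\<forall>i<n. p i \<le> p (Suc i)" "i \<le> j" "j \<le> n"
  shows "p i \<le> p j"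
  by (rule lift_Suc_mono_le_ivl[where N = "{..<n}"]) (use assms in auto)

lemma partition_bounds:
  fixes p :: "nat \<Rightarrow> real"
  assumes "p 0 = a" "p n = b" "\<forall>i<n. p i \<le> p (Suc i)" "i \<le> n"
  shows "a \<le> p i" "p i \<le> b"
  using partition_mono[OF assms(3), of 0 i] partition_mono[OF assms(3), of i n] assms by auto

lemma sum_lessThan_add_eq:
  fixes f :: "nat \<Rightarrow> 'a::comm_monoid_add"
  shows "(\<Sum>i<n + m. f i) = (\<Sum>i<n. f i) + (\<Sum>i<m. f (n + i))"
  by (induction m) (auto simp: add.assoc)

lemma polygonal_sums_segment:
  assumes "a \<le> b"
  shows "dist (g b) (g a) \<in> polygonal_sums g a b"
  unfolding polygonal_sums_def
  by (rule CollectI, rule exI[of _ 1], rule exI[of _ "\<lambda>i. if i = 0 then a else b"]) (use assms in auto)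

lemma polygonal_sums_concat:
  assumes "S1 \<in> polygonal_sums g a b" "S2 \<in> polygonal_sums g b c"
  shows "S1 + S2 \<in> polygonal_sums g a c"
proof -
  obtain n p where p: "S1 = (\<Sum>i<n. dist (g (p (Suc i))) (g (p i)))"
      "p 0 = a" "p n = b" "\<forall>i<n. p i \<le> p (Suc i)"
    using assms(1) unfolding polygonal_sums_def by blast
  obtain m q where q: "S2 = (\<Sum>i<m. dist (g (q (Suc i))) (g (q i)))"
      "q 0 = b" "q m = c" "\<forall>i<m. q i \<le> q (Suc i)"
    using assms(2) unfolding polygonal_sums_def by blast
  define r where "r i = (if i \<le> n then p i else q (i - n))" for i
  have "(\<Sum>i<n + m. dist (g (r (Suc i))) (g (r i)))
      = (\<Sum>i<n. dist (g (r (Suc i))) (g (r i))) + (\<Sum>i<m. dist (g (r (Suc (n + i)))) (g (r (n + i))))"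
    by (rule sum_lessThan_add_eq)
  also have "(\<Sum>i<n. dist (g (r (Suc i))) (g (r i))) = S1"
    using p by (auto simp: r_def intro!: sum.cong)
  also have "(\<Sum>i<m. dist (g (r (Suc (n + i)))) (g (r (n + i)))) = S2"
    using p q by (auto simp: r_def Suc_diff_le intro!: sum.cong)
  finally have sum: "S1 + S2 = (\<Sum>i<n + m. dist (g (r (Suc i))) (g (r i)))" ..
  have ends: "r 0 = a" "r (n + m) = c"
    using p q by (auto simp: r_def)
  have mono: "\<forall>i<n + m. r i \<le> r (Suc i)"
  proof (intro allI impI)
    fix i assume "i < n + m"
    show "r i \<le> r (Suc i)"
      using p q \<open>i < n + m\<close>
      by (cases "i < n") (auto simp: r_def Suc_diff_le not_less, metis zero_less_iff_neq_zero)
  qed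
  have "\<exists>k r. S1 + S2 = (\<Sum>i<k. dist (g (r (Suc i))) (g (r i)))
      \<and> r 0 = a \<and> r k = c \<and> (\<forall>i<k. r i \<le> r (Suc i))"
    using sum ends mono by blast
  then show ?thesis
    unfolding polygonal_sums_def by blast
qed

lemma polygonal_sums_split:
  assumes "S \<in> polygonal_sums g a c" "a \<le> b" "b \<le> c"
  obtains S1 S2 where "S1 \<in> polygonal_sums g a b" "S2 \<in> polygonal_sums g b c" "S \<le> S1 + S2"
proof -
  obtain n p where p: "S = (\<Sum>i<n. dist (g (p (Suc i))) (g (p i)))"
      "p 0 = a" "p n = c" "\<forall>i<n. p i \<le> p (Suc i)"
    using assms(1) unfolding polygonal_sums_def by blast
  define p1 where "p1 i = min (p i) b" for i
  define p2 where "p2 i = max (p i) b" for i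
  have "(\<Sum>i<n. dist (g (p1 (Suc i))) (g (p1 i))) \<in> polygonal_sums g a b"
    unfolding polygonal_sums_def using p assms by (intro CollectI exI[of _ n] exI[of _ p1]) (auto simp: p1_def)
  moreover have "(\<Sum>i<n. dist (g (p2 (Suc i))) (g (p2 i))) \<in> polygonal_sums g b c"
    unfolding polygonal_sums_def using p assms by (intro CollectI exI[of _ n] exI[of _ p2]) (auto simp: p2_def)
  moreover have "dist (g (p (Suc i))) (g (p i))
      \<le> dist (g (p1 (Suc i))) (g (p1 i)) + dist (g (p2 (Suc i))) (g (p2 i))" if "i < n" for i
  proof -
    have le: "p i \<le> p (Suc i)" using p that by auto
    consider "p (Suc i) \<le> b" | "b \<le> p i" | "p i < b" "b < p (Suc i)" by linarith
    then show ?thesis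
    proof cases
      case 3
      then show ?thesis
        using le by (simp add: p1_def p2_def) (metis add.commute dist_commute dist_triangle)
    qed (use le in \<open>simp_all add: p1_def p2_def\<close>)
  qed
  then have "S \<le> (\<Sum>i<n. dist (g (p1 (Suc i))) (g (p1 i))) + (\<Sum>i<n. dist (g (p2 (Suc i))) (g (p2 i)))"
    unfolding p(1) sum.distrib[symmetric] by (intro sum_mono) auto
  ultimately show ?thesis by (rule that)
qed

lemma polygonal_sums_le_lipschitz:
  assumes "\<And>u v. a \<le> u \<Longrightarrow> u \<le> v \<Longrightarrow> v \<le> b \<Longrightarrow> dist (g v) (g u) \<le> K * (v - u)"
    and "S \<in> polygonal_sums g a b"
  shows "S \<le> K * (b - a)"
proof -
  obtain n p where p: "S = (\<Sum>i<n. dist (g (p (Suc i))) (g (p i)))"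
      "p 0 = a" "p n = b" "\<forall>i<n. p i \<le> p (Suc i)"
    using assms(2) unfolding polygonal_sums_def by blast
  have "S \<le> (\<Sum>i<n. K * (p (Suc i) - p i))"
    unfolding p(1)
  proof (intro sum_mono)
    fix i assume "i \<in> {..<n}"
    then show "dist (g (p (Suc i))) (g (p i)) \<le> K * (p (Suc i) - p i)"
      using assms(1) partition_bounds[OF p(2-4), of i] partition_bounds[OF p(2-4), of "Suc i"] p(4)
      by auto
  qed
  also have "\<dots> = K * (b - a)"
    using p by (simp add: sum_distrib_left[symmetric] sum_lessThan_telescope)
  finally show ?thesis .
qed

lemma polygonal_sums_affine_reparam:
  assumes "0 \<le> k" "\<And>u. u \<in> {a..b} \<Longrightarrow> h u = g (c + k * u)"
    and "S \<in> polygonal_sums h a b"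
  shows "S \<in> polygonal_sums g (c + k * a) (c + k * b)"
proof -
  obtain n p where p: "S = (\<Sum>i<n. dist (h (p (Suc i))) (h (p i)))"
      "p 0 = a" "p n = b" "\<forall>i<n. p i \<le> p (Suc i)"
    using assms(3) unfolding polygonal_sums_def by blast
  have "S = (\<Sum>i<n. dist (g (c + k * p (Suc i))) (g (c + k * p i)))"
    unfolding p(1)
  proof (intro sum.cong refl)
    fix i assume "i \<in> {..<n}"
    then show "dist (h (p (Suc i))) (h (p i)) = dist (g (c + k * p (Suc i))) (g (c + k * p i))"
      using assms(2) partition_bounds[OF p(2-4), of i] partition_bounds[OF p(2-4), of "Suc i"] by auto
  qed
  moreover have "\<forall>i<n. c + k * p i \<le> c + k * p (Suc i)"
    using p(4) assms(1) by (auto intro: mult_left_mono)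
  ultimately show ?thesis
    unfolding polygonal_sums_def using p by (intro CollectI exI[of _ n] exI[of _ "\<lambda>i. c + k * p i"]) auto
qed

lemma polygonal_sum_le_curve_length:
  "rectifiable_on g a b \<Longrightarrow> S \<in> polygonal_sums g a b \<Longrightarrow> S \<le> curve_length g a b"
  unfolding rectifiable_on_def curve_length_def by (rule cSup_upper)

lemma curve_length_le:
  "a \<le> b \<Longrightarrow> (\<And>S. S \<in> polygonal_sums g a b \<Longrightarrow> S \<le> M) \<Longrightarrow> curve_length g a b \<le> M"
  unfolding curve_length_def using polygonal_sums_segment[of a b g] by (intro cSup_least) auto

lemma rectifiable_onI:
  "(\<And>S. S \<in> polygonal_sums g a b \<Longrightarrow> S \<le> M) \<Longrightarrow> rectifiable_on g a b"
  unfolding rectifiable_on_def bdd_above_def by blast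

lemma curve_length_nonneg: "a \<le> b \<Longrightarrow> rectifiable_on g a b \<Longrightarrow> 0 \<le> curve_length g a b"
  using polygonal_sum_le_curve_length[OF _ polygonal_sums_segment] zero_le_dist order_trans by blast

lemma curve_length_superadditive:
  assumes "rectifiable_on g a c" "a \<le> b" "b \<le> c"
  shows "curve_length g a b + curve_length g b c \<le> curve_length g a c"
proof -
  have "curve_length g b c \<le> curve_length g a c - curve_length g a b"
  proof (rule curve_length_le[OF assms(3)])
    fix S2 assume S2: "S2 \<in> polygonal_sums g b c"
    have "curve_length g a b \<le> curve_length g a c - S2"
    proof (rule curve_length_le[OF assms(2)])
      fix S1 assume "S1 \<in> polygonal_sums g a b"
      from polygonal_sum_le_curve_length[OF assms(1) polygonal_sums_concat[OF this S2]]
      show "S1 \<le> curve_length g a c - S2" by simp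
    qed
    then show "S2 \<le> curve_length g a c - curve_length g a b" by simp
  qed
  then show ?thesis by simp
qed

lemma
  assumes "rectifiable_on g a b" "rectifiable_on g b c" "a \<le> b" "b \<le> c"
  shows rectifiable_on_join: "rectifiable_on g a c"
    and curve_length_subadditive: "curve_length g a c \<le> curve_length g a b + curve_length g b c"
proof -
  have bound: "S \<le> curve_length g a b + curve_length g b c" if S: "S \<in> polygonal_sums g a c" for S
  proof -
    obtain S1 S2 where "S1 \<in> polygonal_sums g a b" "S2 \<in> polygonal_sums g b c" "S \<le> S1 + S2"
      using polygonal_sums_split[OF S assms(3,4)] by blast
    then show ?thesis
      using polygonal_sum_le_curve_length[OF assms(1)] polygonal_sum_le_curve_length[OF assms(2)] by force
  qed
  show "rectifiable_on g a c" using bound by (rule rectifiable_onI)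
  show "curve_length g a c \<le> curve_length g a b + curve_length g b c"
    using bound assms by (intro curve_length_le) auto
qed

lemma
  assumes "a \<le> b" "\<And>u v. a \<le> u \<Longrightarrow> u \<le> v \<Longrightarrow> v \<le> b \<Longrightarrow> dist (g v) (g u) \<le> K * (v - u)"
  shows rectifiable_on_lipschitz: "rectifiable_on g a b"
    and curve_length_le_lipschitz: "curve_length g a b \<le> K * (b - a)"
  using polygonal_sums_le_lipschitz[OF assms(2)]
  by (auto intro: rectifiable_onI curve_length_le[OF assms(1)])

lemma
  assumes "0 \<le> k" "a \<le> b" "\<And>u. u \<in> {a..b} \<Longrightarrow> h u = g (c + k * u)"
    and "rectifiable_on g (c + k * a) (c + k * b)"
  shows rectifiable_on_affine_reparam: "rectifiable_on h a b"
    and curve_length_affine_reparam_le: "curve_length h a b \<le> curve_length g (c + k * a) (c + k * b)"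
proof -
  have bound: "S \<le> curve_length g (c + k * a) (c + k * b)" if "S \<in> polygonal_sums h a b" for S
    using polygonal_sum_le_curve_length[OF assms(4) polygonal_sums_affine_reparam[where h = h, OF assms(1,3) that]] .
  show "rectifiable_on h a b" using bound by (rule rectifiable_onI)
  show "curve_length h a b \<le> curve_length g (c + k * a) (c + k * b)"
    using bound by (rule curve_length_le[OF assms(2)])
qed

section \<open>Balls of a carrot\<close>

lemma polygonal_sum_last_departure:
  assumes "S \<in> polygonal_sums g a b" "0 < S"
  obtains s s' S' where "a \<le> s" "s \<le> s'" "s' \<le> b" "g s \<noteq> g b" "g s' = g b"
    "S' \<in> polygonal_sums g a s" "S = S' + dist (g b) (g s)"
proof -
  obtain n p where p: "S = (\<Sum>i<n. dist (g (p (Suc i))) (g (p i)))"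
      "p 0 = a" "p n = b" "\<forall>i<n. p i \<le> p (Suc i)"
    using assms(1) unfolding polygonal_sums_def by blast
  define K where "K = {i. i \<le> n \<and> g (p i) \<noteq> g b}"
  have "K \<noteq> {}"
  proof
    assume "K = {}"
    then have "S = 0"
      unfolding p(1) K_def by (intro sum.neutral) (auto simp: Suc_leI)
    with assms(2) show False by simp
  qed
  define k where "k = Max K"
  have "finite K" by (simp add: K_def)
  then have "k \<in> K" using \<open>K \<noteq> {}\<close> by (simp add: k_def)
  then have k: "k < n" "g (p k) \<noteq> g b"
    using p(3) by (auto simp: K_def le_less)
  have after: "g (p i) = g b" if "k < i" "i \<le> n" for i
  proof (rule ccontr)
    assume "g (p i) \<noteq> g b"
    with that have "i \<in> K" by (simp add: K_def)
    then have "i \<le> k" using Max_ge[OF \<open>finite K\<close>] by (simp add: k_def)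
    with that show False by simp
  qed
  define S' where "S' = (\<Sum>i<k. dist (g (p (Suc i))) (g (p i)))"
  have "S = (\<Sum>i<Suc k + (n - Suc k). dist (g (p (Suc i))) (g (p i)))"
    using k p(1) by simp
  also have "\<dots> = (\<Sum>i<Suc k. dist (g (p (Suc i))) (g (p i)))
      + (\<Sum>i<n - Suc k. dist (g (p (Suc (Suc k + i)))) (g (p (Suc k + i))))"
    by (rule sum_lessThan_add_eq)
  also have "(\<Sum>i<n - Suc k. dist (g (p (Suc (Suc k + i)))) (g (p (Suc k + i)))) = 0"
    using after by (intro sum.neutral) auto
  finally have "S = S' + dist (g b) (g (p k))"
    using after[of "Suc k"] k by (simp add: S'_def)
  moreover have "S' \<in> polygonal_sums g a (p k)"
    unfolding polygonal_sums_def S'_def using p k by (intro CollectI exI[of _ k] exI[of _ p]) auto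
  moreover have "a \<le> p k" "p k \<le> p (Suc k)" "p (Suc k) \<le> b"
    using partition_bounds[OF p(2-4), of k] partition_bounds[OF p(2-4), of "Suc k"] p(4) k by auto
  ultimately show ?thesis
    using that k(2) after[of "Suc k"] k(1) by auto
qed

lemma continuous_approach_from_distinct:
  fixes g :: "real \<Rightarrow> 'a::metric_space"
  assumes "continuous_on {s..s'} g" "s \<le> s'" "g s \<noteq> x" "g s' = x" "0 < \<epsilon>"
  obtains u where "s \<le> u" "u \<le> s'" "g u \<noteq> x" "dist (g u) x < \<epsilon>"
proof -
  define c where "c = min (\<epsilon> / 2) (dist (g s) x)"
  have c: "0 < c" "c < \<epsilon>"
    using assms(3,5) by (auto simp: c_def)
  have "continuous_on {s..s'} (\<lambda>u. dist (g u) x)"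
    by (intro continuous_intros assms(1))
  then obtain u where "s \<le> u" "u \<le> s'" "dist (g u) x = c"
    using IVT2'[of "\<lambda>u. dist (g u) x" s' c s] assms(2,4) c(1) by (auto simp: c_def)
  with c show ?thesis
    using that by auto
qed

lemma long_initial_arc_near_end:
  assumes "locally_rectifiable_path g" "\<sigma> \<in> {0..1}" "0 < \<epsilon>" "\<epsilon> \<le> curve_length g 0 \<sigma>"
  obtains u where "u \<in> {0..1}" "g u \<noteq> g \<sigma>" "dist (g u) (g \<sigma>) < \<epsilon>"
    "curve_length g 0 \<sigma> - \<epsilon> < curve_length g 0 u"
proof -
  have "polygonal_sums g 0 \<sigma> \<noteq> {}"
    using polygonal_sums_segment[of 0 \<sigma> g] assms(2) by auto
  moreover have "curve_length g 0 \<sigma> - \<epsilon> / 2 < Sup (polygonal_sums g 0 \<sigma>)"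
    using assms(3) by (simp add: curve_length_def)
  ultimately obtain S where S: "S \<in> polygonal_sums g 0 \<sigma>" "curve_length g 0 \<sigma> - \<epsilon> / 2 < S"
    using less_cSupE by blast
  then have "0 < S" using assms(3,4) by linarith
  then obtain s s' S' where ss': "0 \<le> s" "s \<le> s'" "s' \<le> \<sigma>" "g s \<noteq> g \<sigma>" "g s' = g \<sigma>"
      "S' \<in> polygonal_sums g 0 s" "S = S' + dist (g \<sigma>) (g s)"
    using polygonal_sum_last_departure[OF S(1)] by blast
  have "continuous_on {s..s'} g"
    using assms(1,2) ss' unfolding locally_rectifiable_path_def path_def
    by (auto elim!: continuous_on_subset)
  then obtain u where u: "s \<le> u" "u \<le> s'" "g u \<noteq> g \<sigma>" "dist (g u) (g \<sigma>) < \<epsilon> / 2"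
    using continuous_approach_from_distinct[OF _ ss'(2,4,5)] assms(3) by (metis half_gt_zero)
  have "u \<in> {0..1}" using u ss' assms(2) by auto
  have "S' + dist (g u) (g s) \<le> curve_length g 0 u"
    using assms(1) \<open>u \<in> {0..1}\<close> ss'(1) u(1) unfolding locally_rectifiable_path_def
    by (intro polygonal_sum_le_curve_length polygonal_sums_concat[OF ss'(6) polygonal_sums_segment]) auto
  moreover have "dist (g \<sigma>) (g s) \<le> dist (g u) (g s) + dist (g u) (g \<sigma>)"
    by (metis add.commute dist_commute dist_triangle)
  ultimately have "curve_length g 0 \<sigma> - \<epsilon> < curve_length g 0 u"
    using S(2) ss'(7) u(4) by linarith
  moreover have "dist (g u) (g \<sigma>) < \<epsilon>"
    using u(4) assms(3) by linarith
  ultimately show ?thesis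
    using that u(3) \<open>u \<in> {0..1}\<close> by blast
qed

lemma open_carrot: "open (carrot g J)"
  unfolding carrot_def by auto

lemma ball_subset_carrot:
  assumes "locally_rectifiable_path g" "0 < J" "\<sigma> \<in> {0..1}"
  shows "ball (g \<sigma>) (curve_length g 0 \<sigma> / J) \<subseteq> carrot g J"
proof
  fix w assume "w \<in> ball (g \<sigma>) (curve_length g 0 \<sigma> / J)"
  then have w: "J * dist w (g \<sigma>) < curve_length g 0 \<sigma>"
    using assms(2) by (simp add: dist_commute field_simps)
  show "w \<in> carrot g J"
  proof (cases "g \<sigma> = g 0")
    case False
    with w assms(2,3) show ?thesis
      unfolding carrot_def by (auto simp: dist_commute field_simps)
  next
    case True
    \<comment> \<open>The ball is not in the union defining the carrot; split the slack of w as J * eps + eps.\<close>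
    define \<epsilon> where "\<epsilon> = (curve_length g 0 \<sigma> - J * dist w (g \<sigma>)) / (J + 1)"
    have "0 \<le> J * dist w (g \<sigma>)"
      using assms(2) by simp
    then have "0 < curve_length g 0 \<sigma>"
      using w by linarith
    have "0 < \<epsilon>"
      using w assms(2) by (simp add: \<epsilon>_def)
    moreover have "\<epsilon> \<le> curve_length g 0 \<sigma>"
      unfolding \<epsilon>_def using assms(2) \<open>0 \<le> J * dist w (g \<sigma>)\<close> \<open>0 < curve_length g 0 \<sigma>\<close>
      by (simp add: field_simps add_nonneg_nonneg)
    ultimately obtain u where u: "u \<in> {0..1}" "g u \<noteq> g \<sigma>" "dist (g u) (g \<sigma>) < \<epsilon>"
        "curve_length g 0 \<sigma> - \<epsilon> < curve_length g 0 u"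
      using long_initial_arc_near_end[OF assms(1,3)] by blast
    have "J * dist w (g u) \<le> J * dist w (g \<sigma>) + J * dist (g u) (g \<sigma>)"
      using assms(2) dist_triangle[of w "g u" "g \<sigma>"]
      by (simp add: dist_commute distrib_left[symmetric])
    also have "\<dots> < J * dist w (g \<sigma>) + J * \<epsilon>"
      using u(3) assms(2) by simp
    also have "\<dots> = curve_length g 0 \<sigma> - \<epsilon>"
      using assms(2) by (simp add: \<epsilon>_def field_simps)
    also have "\<dots> < curve_length g 0 u"
      by (fact u(4))
    finally show ?thesis
      using u(1,2) True assms(2) unfolding carrot_def by (auto simp: dist_commute field_simps)
  qed
qed

section \<open>The shortcut path\<close>

definition shortcut_path :: "'a::real_normed_vector \<Rightarrow> (real \<Rightarrow> 'a) \<Rightarrow> real \<Rightarrow> real \<Rightarrow> 'a" where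
  "shortcut_path z g t = linepath z (g t) +++ subpath t 1 g"

lemma shortcut_path_segment:
  "u \<le> 1/2 \<Longrightarrow> shortcut_path z g t u = (1 - 2 * u) *\<^sub>R z + (2 * u) *\<^sub>R g t"
  by (simp add: shortcut_path_def joinpaths_def linepath_def)

lemma shortcut_path_tail:
  assumes "1/2 \<le> u"
  shows "shortcut_path z g t u = g (t + (2 * u - 1) * (1 - t))"
proof (cases "u = 1/2")
  case True
  show ?thesis unfolding True by (simp add: shortcut_path_def joinpaths_def linepath_def)
next
  case False
  with assms show ?thesis by (simp add: shortcut_path_def joinpaths_def subpath_def algebra_simps)
qed

lemma shortcut_tail_parameter:
  fixes t \<tau> :: real
  assumes "t \<in> {0..1}" "1/2 \<le> \<tau>" "\<tau> \<le> 1"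
  shows "t \<le> t + (2 * \<tau> - 1) * (1 - t)" "t + (2 * \<tau> - 1) * (1 - t) \<le> 1"
proof -
  have "0 \<le> (2 * \<tau> - 1) * (1 - t)"
    using assms by simp
  moreover have "(2 * \<tau> - 1) * (1 - t) \<le> 1 * (1 - t)"
    using assms by (intro mult_right_mono) auto
  ultimately show "t \<le> t + (2 * \<tau> - 1) * (1 - t)" "t + (2 * \<tau> - 1) * (1 - t) \<le> 1"
    by simp_all
qed

lemma path_shortcut_path: "path g \<Longrightarrow> t \<in> {0..1} \<Longrightarrow> path (shortcut_path z g t)"
  unfolding shortcut_path_def by (intro path_join_imp path_subpath) auto

lemma pathstart_shortcut_path [simp]: "pathstart (shortcut_path z g t) = z"
  and pathfinish_shortcut_path [simp]: "pathfinish (shortcut_path z g t) = g 1"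
  by (simp_all add: shortcut_path_def pathstart_def pathfinish_def joinpaths_def subpath_def linepath_def)

lemma subpath_shortcut_path:
  "u \<in> {0..1} \<Longrightarrow> subpath (1/2) 1 (shortcut_path z g t) u = subpath t 1 g u"
  by (simp add: subpath_def shortcut_path_tail algebra_simps)

lemma
  assumes "0 \<le> \<tau>" "\<tau> \<le> 1/2"
  shows rectifiable_on_shortcut_path_segment: "rectifiable_on (shortcut_path z g t) 0 \<tau>"
    and curve_length_shortcut_path_segment:
      "curve_length (shortcut_path z g t) 0 \<tau> \<le> 2 * dist z (g t) * \<tau>"
proof -
  have lip: "dist (shortcut_path z g t v) (shortcut_path z g t u) \<le> 2 * dist z (g t) * (v - u)"
    if "u \<le> v" "v \<le> \<tau>" for u v
  proof -
    have "shortcut_path z g t v - shortcut_path z g t u = (2 * v - 2 * u) *\<^sub>R (g t - z)"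
      using that assms by (simp add: shortcut_path_segment algebra_simps)
    then have "dist (shortcut_path z g t v) (shortcut_path z g t u) = 2 * dist z (g t) * (v - u)"
      using that by (simp add: dist_norm norm_minus_commute)
    then show ?thesis by simp
  qed
  show "rectifiable_on (shortcut_path z g t) 0 \<tau>"
    using rectifiable_on_lipschitz[OF assms(1) lip] .
  show "curve_length (shortcut_path z g t) 0 \<tau> \<le> 2 * dist z (g t) * \<tau>"
    using curve_length_le_lipschitz[OF assms(1) lip] by simp
qed

lemma
  assumes g: "locally_rectifiable_path g" and t: "t \<in> {0..1}" and \<tau>: "1/2 \<le> \<tau>" "\<tau> \<le> 1"
  shows rectifiable_on_shortcut_path_tail: "rectifiable_on (shortcut_path z g t) 0 \<tau>"
    and curve_length_shortcut_path_tail: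
      "curve_length (shortcut_path z g t) 0 \<tau> \<le> dist z (g t) + curve_length g t (t + (2 * \<tau> - 1) * (1 - t))"
proof -
  let ?h = "shortcut_path z g t"
  let ?c = "2 * t - 1" and ?k = "2 * (1 - t)"
  have ends: "?c + ?k * (1/2) = t" "?c + ?k * \<tau> = t + (2 * \<tau> - 1) * (1 - t)"
    by (simp_all add: algebra_simps)
  have "rectifiable_on g (?c + ?k * (1/2)) (?c + ?k * \<tau>)"
    using g t shortcut_tail_parameter[OF t \<tau>] unfolding ends locally_rectifiable_path_def by simp
  moreover have "?h u = g (?c + ?k * u)" if "u \<in> {1/2..\<tau>}" for u
    using that by (simp add: shortcut_path_tail algebra_simps)
  ultimately have tail: "rectifiable_on ?h (1/2) \<tau>"
      "curve_length ?h (1/2) \<tau> \<le> curve_length g t (t + (2 * \<tau> - 1) * (1 - t))"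
    using rectifiable_on_affine_reparam[of ?k "1/2" \<tau> ?h g ?c]
      curve_length_affine_reparam_le[of ?k "1/2" \<tau> ?h g ?c] t \<tau> unfolding ends by auto
  have segment: "rectifiable_on ?h 0 (1/2)" "curve_length ?h 0 (1/2) \<le> dist z (g t)"
    using rectifiable_on_shortcut_path_segment[of "1/2"] curve_length_shortcut_path_segment[of "1/2"] by auto
  show "rectifiable_on ?h 0 \<tau>"
    using rectifiable_on_join[OF segment(1) tail(1)] \<tau> by simp
  show "curve_length ?h 0 \<tau> \<le> dist z (g t) + curve_length g t (t + (2 * \<tau> - 1) * (1 - t))"
    using curve_length_subadditive[OF segment(1) tail(1)] segment(2) tail(2) \<tau> by simp
qed

lemma rectifiable_on_shortcut_path:
  "locally_rectifiable_path g \<Longrightarrow> t \<in> {0..1} \<Longrightarrow> \<tau> \<in> {0..1} \<Longrightarrow> rectifiable_on (shortcut_path z g t) 0 \<tau>"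
  using rectifiable_on_shortcut_path_segment[of \<tau>] rectifiable_on_shortcut_path_tail[of g t \<tau>]
  by (cases "\<tau> \<le> 1/2") auto

lemma curve_length_shortcut_path_tail_less:
  assumes g: "locally_rectifiable_path g" and t: "t \<in> {0..1}" and \<tau>: "1/2 \<le> \<tau>" "\<tau> \<le> 1"
    and z: "dist z (g t) < curve_length g 0 t"
  shows "curve_length (shortcut_path z g t) 0 \<tau> < curve_length g 0 (t + (2 * \<tau> - 1) * (1 - t))"
proof -
  let ?\<sigma> = "t + (2 * \<tau> - 1) * (1 - t)"
  have "curve_length g 0 t + curve_length g t ?\<sigma> \<le> curve_length g 0 ?\<sigma>"
    using g t shortcut_tail_parameter[OF t \<tau>] unfolding locally_rectifiable_path_def
    by (intro curve_length_superadditive) auto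
  with curve_length_shortcut_path_tail[OF g t \<tau>, of z] z show ?thesis
    by linarith
qed

lemma cball_shortcut_path_subset_carrot:
  assumes g: "locally_rectifiable_path g" and J: "1 \<le> J" and t: "t \<in> {0..1}"
    and z: "dist z (g t) < curve_length g 0 t / J" and \<tau>: "\<tau> \<in> {0..1}"
  shows "cball (shortcut_path z g t \<tau>) (curve_length (shortcut_path z g t) 0 \<tau> / J) \<subseteq> carrot g J"
proof (cases "\<tau> \<le> 1/2")
  case True
  let ?r = "dist z (g t)"
  have "curve_length (shortcut_path z g t) 0 \<tau> / J \<le> 2 * ?r * \<tau> / J"
    using curve_length_shortcut_path_segment[of \<tau> z g t] True \<tau> J by (simp add: divide_right_mono)
  also have "\<dots> \<le> 2 * ?r * \<tau> / 1"
    using J \<tau> by (intro divide_left_mono) auto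
  finally have radius: "curve_length (shortcut_path z g t) 0 \<tau> / J \<le> 2 * ?r * \<tau>" by simp
  have "g t - shortcut_path z g t \<tau> = (1 - 2 * \<tau>) *\<^sub>R (g t - z)"
    using True by (simp add: shortcut_path_segment algebra_simps)
  then have centre: "dist (g t) (shortcut_path z g t \<tau>) = (1 - 2 * \<tau>) * ?r"
    using True by (simp add: dist_norm norm_minus_commute)
  have "cball (shortcut_path z g t \<tau>) (curve_length (shortcut_path z g t) 0 \<tau> / J)
      \<subseteq> ball (g t) (curve_length g 0 t / J)"
  proof
    fix w assume "w \<in> cball (shortcut_path z g t \<tau>) (curve_length (shortcut_path z g t) 0 \<tau> / J)"
    then have "dist (g t) w \<le> (1 - 2 * \<tau>) * ?r + 2 * ?r * \<tau>"
      using dist_triangle[of "g t" w "shortcut_path z g t \<tau>"] centre radius by simp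
    with z show "w \<in> ball (g t) (curve_length g 0 t / J)"
      by (simp add: algebra_simps)
  qed
  also have "\<dots> \<subseteq> carrot g J"
    using ball_subset_carrot[OF g _ t] J by simp
  finally show ?thesis .
next
  case False
  let ?\<sigma> = "t + (2 * \<tau> - 1) * (1 - t)"
  have "dist z (g t) < curve_length g 0 t"
    using less_if_less_divide_ge_one[OF J zero_le_dist z] .
  then have "curve_length (shortcut_path z g t) 0 \<tau> < curve_length g 0 ?\<sigma>"
    using curve_length_shortcut_path_tail_less[OF g t] False \<tau> by simp
  then have "curve_length (shortcut_path z g t) 0 \<tau> / J < curve_length g 0 ?\<sigma> / J"
    using J by (simp add: divide_strict_right_mono)
  then have "cball (g ?\<sigma>) (curve_length (shortcut_path z g t) 0 \<tau> / J) \<subseteq> ball (g ?\<sigma>) (curve_length g 0 ?\<sigma> / J)"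
    by (auto simp: subset_eq)
  also have "\<dots> \<subseteq> carrot g J"
    using ball_subset_carrot[OF g, of J ?\<sigma>] J t shortcut_tail_parameter[of t \<tau>] False \<tau> by simp
  finally show ?thesis
    using False by (simp add: shortcut_path_tail)
qed

lemma path_image_shortcut_path_subset_carrot:
  assumes g: "locally_rectifiable_path g" and J: "1 \<le> J" and t: "t \<in> {0..1}"
    and z: "dist z (g t) < curve_length g 0 t / J"
  shows "path_image (shortcut_path z g t) \<subseteq> carrot g J"
proof
  fix w assume "w \<in> path_image (shortcut_path z g t)"
  then obtain \<tau> where \<tau>: "\<tau> \<in> {0..1}" "w = shortcut_path z g t \<tau>"
    unfolding path_image_def by blast
  have "0 \<le> curve_length (shortcut_path z g t) 0 \<tau>"
    using curve_length_nonneg rectifiable_on_shortcut_path[OF g t \<tau>(1)] \<tau>(1) by auto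
  then have "w \<in> cball (shortcut_path z g t \<tau>) (curve_length (shortcut_path z g t) 0 \<tau> / J)"
    using \<tau>(2) J by simp
  then show "w \<in> carrot g J"
    using cball_shortcut_path_subset_carrot[OF assms \<tau>(1)] by blast
qed

lemma carrot_shortcut_path_subset_carrot:
  assumes g: "locally_rectifiable_path g" and J: "1 \<le> J" and t: "t \<in> {0..1}"
    and z: "dist z (g t) < curve_length g 0 t / J"
  shows "carrot (shortcut_path z g t) J \<subseteq> carrot g J"
proof
  fix w assume "w \<in> carrot (shortcut_path z g t) J"
  then obtain \<tau> where "\<tau> \<in> {0..1}"
      "w \<in> ball (shortcut_path z g t \<tau>) (curve_length (shortcut_path z g t) 0 \<tau> / J)"
    unfolding carrot_def by blast
  then show "w \<in> carrot g J"
    using cball_shortcut_path_subset_carrot[OF assms] by fastforce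
qed

lemma carrot_shortcut:
  assumes g: "locally_rectifiable_path g" and J: "1 \<le> J" and z: "z \<in> carrot g J"
  shows "\<exists>t \<in> {0..1}. rectifiable_path (shortcut_path z g t)
    \<and> path_image (shortcut_path z g t) \<subseteq> carrot g J \<and> carrot (shortcut_path z g t) J \<subseteq> carrot g J
    \<and> (\<forall>u \<in> {0..1}.
          curve_length (shortcut_path z g t) 0 (1/2 + u * (1 - 1/2)) \<le> curve_length g 0 (t + u * (1 - t)))"
proof -
  obtain t where t: "t \<in> {0..1}" "dist z (g t) < curve_length g 0 t / J"
    using z unfolding carrot_def by (auto simp: dist_commute)
  have "curve_length (shortcut_path z g t) 0 (1/2 + u * (1 - 1/2)) \<le> curve_length g 0 (t + u * (1 - t))"
    if "u \<in> {0..1}" for u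
  proof -
    have "dist z (g t) < curve_length g 0 t"
      using less_if_less_divide_ge_one[OF J zero_le_dist t(2)] .
    moreover have "t + (2 * (1/2 + u * (1 - 1/2)) - 1) * (1 - t) = t + u * (1 - t)"
      by (simp add: algebra_simps)
    ultimately show ?thesis
      using curve_length_shortcut_path_tail_less[OF g t(1), of "1/2 + u * (1 - 1/2)" z] that by simp
  qed
  moreover have "rectifiable_path (shortcut_path z g t)"
    using g t path_shortcut_path rectifiable_on_shortcut_path[OF g t(1), of 1]
    unfolding rectifiable_path_def locally_rectifiable_path_def by auto
  ultimately show ?thesis
    using path_image_shortcut_path_subset_carrot[OF g J t] carrot_shortcut_path_subset_carrot[OF g J t]
    by (intro bexI[OF _ t(1)] conjI ballI) auto
qed

theorem propositionA1:
  fixes \<gamma> :: "real \<Rightarrow> real^2" and J :: real and x y :: "real^2"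
  assumes "J \<ge> 1"
    and "locally_rectifiable_path \<gamma>"
    and "pathstart \<gamma> = x" and "pathfinish \<gamma> = y"
  shows "john_carrot_domain (carrot \<gamma> J) J y \<and>
    (\<forall>z \<in> carrot \<gamma> J. \<exists>\<gamma>z s s'.
        rectifiable_path \<gamma>z \<and> pathstart \<gamma>z = z \<and> pathfinish \<gamma>z = y \<and>
        s \<in> {0..1} \<and> s' \<in> {0..1} \<and>
        (\<forall>u \<in> {0..1}. subpath s' 1 \<gamma>z u = subpath s 1 \<gamma> u) \<and>
        (\<forall>u \<in> {0..1}. curve_length \<gamma>z 0 (s' + u * (1 - s')) \<le> curve_length \<gamma> 0 (s + u * (1 - s))) \<and>
        carrot \<gamma>z J \<subseteq> carrot \<gamma> J)"
proof -
  have y: "\<gamma> 1 = y"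
    using assms(4) by (simp add: pathfinish_def)
  have per_point: "(\<exists>h. path h \<and> path_image h \<subseteq> carrot \<gamma> J \<and> pathstart h = z \<and> pathfinish h = y
        \<and> carrot h J \<subseteq> carrot \<gamma> J) \<and>
      (\<exists>\<gamma>z s s'.
        rectifiable_path \<gamma>z \<and> pathstart \<gamma>z = z \<and> pathfinish \<gamma>z = y \<and>
        s \<in> {0..1} \<and> s' \<in> {0..1} \<and>
        (\<forall>u \<in> {0..1}. subpath s' 1 \<gamma>z u = subpath s 1 \<gamma> u) \<and>
        (\<forall>u \<in> {0..1}. curve_length \<gamma>z 0 (s' + u * (1 - s')) \<le> curve_length \<gamma> 0 (s + u * (1 - s))) \<and>
        carrot \<gamma>z J \<subseteq> carrot \<gamma> J)" (is "?joined \<and> ?shortcut")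
    if z: "z \<in> carrot \<gamma> J" for z
  proof -
    from carrot_shortcut[OF assms(2,1) z] obtain t where "t \<in> {0..1}" and
      "rectifiable_path (shortcut_path z \<gamma> t)
        \<and> path_image (shortcut_path z \<gamma> t) \<subseteq> carrot \<gamma> J \<and> carrot (shortcut_path z \<gamma> t) J \<subseteq> carrot \<gamma> J
        \<and> (\<forall>u \<in> {0..1}.
              curve_length (shortcut_path z \<gamma> t) 0 (1/2 + u * (1 - 1/2)) \<le> curve_length \<gamma> 0 (t + u * (1 - t)))" ..
    note t = this
    have ?joined
      using t y by (intro exI[of _ "shortcut_path z \<gamma> t"]) (simp add: rectifiable_path_def)
    moreover have ?shortcut
      by (rule exI[of _ "shortcut_path z \<gamma> t"], rule exI[of _ t], rule exI[of _ "1/2"])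
        (use t y in \<open>auto simp: subpath_shortcut_path\<close>)
    ultimately show ?thesis ..
  qed
  have "connected (carrot \<gamma> J)"
  proof (intro path_connected_imp_connected path_connected_if_joined_to_point)
    fix p assume "p \<in> carrot \<gamma> J"
    then show "\<exists>h. path h \<and> path_image h \<subseteq> carrot \<gamma> J \<and> pathstart h = p \<and> pathfinish h = y"
      using per_point by blast
  qed
  then show ?thesis
    unfolding john_carrot_domain_def using open_carrot per_point by blast
qed

end
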